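(* Let $\mu>1$ be an integer upper bound, $d>1$ an arbitrary discount factor and $v\in\mathbb{Q}$ a threshold value. Then: (1) the comparison language with upper bound $\mu$, relation $\mathsf{R}$, discount factor $d$ and threshold $v$ is a safety language for $\mathsf{R}\in\{\le,\ge,=\}$; (2) it is a co-safety language for $\mathsf{R}\in\{<,>,\neq\}$.
   Context: For an infinite sequence $A=a_0a_1\dots$, $\mathrm{DS}(A,d)=\sum_{i\ge0}a_i/d^i$. The comparison language with upper bound $\mu$, relation $\mathsf{R}\in\{<,>,\le,\ge,=,\neq\}$, discount factor $d$ and threshold value $v$ is the set of infinite words $A$ over the alphabet $\Sigma=\{-\mu,\dots,\mu\}$ such that $\mathrm{DS}(A,d)\ \mathsf{R}\ v$. For a language $L\subseteq\Sigma^\omega$, a finite word $x\in\Sigma^*$ is a bad prefix for $L$ if $x\cdot y\notin L$ for all $y\in\Sigma^\omega$; $L$ is a safety language if every word not in $L$ has a bad prefix for $L$; $L$ is a co-safety language if its complement $\Sigma^\omega\setminus L$ is a safety language. *)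

theory Defs
  imports Complex_Main
begin

definition alphabet :: "int \<Rightarrow> int set" where
  "alphabet \<mu> = {-\<mu>..\<mu>}"

definition omega_words :: "'a set \<Rightarrow> (nat \<Rightarrow> 'a) set" where
  "omega_words \<Sigma> = {w. \<forall>i. w i \<in> \<Sigma>}"

definition conc :: "'a list \<Rightarrow> (nat \<Rightarrow> 'a) \<Rightarrow> (nat \<Rightarrow> 'a)" where
  "conc x y = (\<lambda>i. if i < length x then x ! i else y (i - length x))"

definition DS :: "(nat \<Rightarrow> int) \<Rightarrow> real \<Rightarrow> real" where
  "DS A d = (\<Sum>i. real_of_int (A i) / d ^ i)"

datatype rel = Lt | Gt | Le | Ge | Eq | Neq

fun rel_sem :: "rel \<Rightarrow> real \<Rightarrow> real \<Rightarrow> bool" where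
  "rel_sem Lt a b = (a < b)"
| "rel_sem Gt a b = (a > b)"
| "rel_sem Le a b = (a \<le> b)"
| "rel_sem Ge a b = (a \<ge> b)"
| "rel_sem Eq a b = (a = b)"
| "rel_sem Neq a b = (a \<noteq> b)"

definition comparison_language :: "int \<Rightarrow> rel \<Rightarrow> real \<Rightarrow> real \<Rightarrow> (nat \<Rightarrow> int) set" where
  "comparison_language \<mu> R d v = {A \<in> omega_words (alphabet \<mu>). rel_sem R (DS A d) v}"

definition bad_prefix :: "'a set \<Rightarrow> (nat \<Rightarrow> 'a) set \<Rightarrow> 'a list \<Rightarrow> bool" where
  "bad_prefix \<Sigma> L x \<longleftrightarrow> set x \<subseteq> \<Sigma> \<and> (\<forall>y \<in> omega_words \<Sigma>. conc x y \<notin> L)"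

definition safety :: "'a set \<Rightarrow> (nat \<Rightarrow> 'a) set \<Rightarrow> bool" where
  "safety \<Sigma> L \<longleftrightarrow> (\<forall>w \<in> omega_words \<Sigma> - L. \<exists>n. bad_prefix \<Sigma> L (map w [0..<n]))"

definition co_safety :: "'a set \<Rightarrow> (nat \<Rightarrow> 'a) set \<Rightarrow> bool" where
  "co_safety \<Sigma> L \<longleftrightarrow> safety \<Sigma> (omega_words \<Sigma> - L)"

end

theory Submission
  imports Defs
begin

text \<open>Two words over the bounded alphabet that share a prefix of length \<open>n\<close> have discounted
  sums within \<open>2\<mu> d\<^sup>-\<^sup>n / (1 - 1/d)\<close> of each other, so the discounted sum is
  continuous for the prefix topology. Hence, if \<open>DS A d \<noteq> v\<close>, a long enough prefix of \<open>A\<close>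
  already fixes on which side of \<open>v\<close> every continuation lies. A word violating a non-strict
  relation, or satisfying a strict one, has \<open>DS A d \<noteq> v\<close>, and such a prefix is the required
  bad prefix.\<close>

lemma abs_suminf_le_geometric_tail:
  fixes g :: "nat \<Rightarrow> real"
  assumes prefix_zero: "\<And>i. i < n \<Longrightarrow> g i = 0"
    and bound: "\<And>i. \<bar>g i\<bar> \<le> M * q ^ i" and "0 \<le> q" "q < 1"
  shows "\<bar>suminf g\<bar> \<le> M * q ^ n / (1 - q)"
proof -
  have geometric: "summable (\<lambda>i. M * q ^ n * q ^ i)"
    using assms by (intro summable_mult summable_geometric) auto
  have tail_bound: "\<bar>g (i + n)\<bar> \<le> M * q ^ n * q ^ i" for i
    using bound[of "i + n"] by (simp add: power_add mult_ac)
  have tail_summable: "summable (\<lambda>i. \<bar>g (i + n)\<bar>)"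
    by (rule summable_comparison_test[OF _ geometric]) (use tail_bound in auto)
  then have "summable g"
    using summable_rabs_cancel summable_iff_shift by blast
  then have "suminf g = (\<Sum>i. g (i + n))"
    using suminf_split_initial_segment[of g n] prefix_zero by simp
  also have "\<bar>\<dots>\<bar> \<le> (\<Sum>i. \<bar>g (i + n)\<bar>)"
    by (rule summable_rabs[OF tail_summable])
  also have "\<dots> \<le> (\<Sum>i. M * q ^ n * q ^ i)"
    by (rule suminf_le[OF tail_bound tail_summable geometric])
  also have "\<dots> = M * q ^ n / (1 - q)"
    using assms by (subst suminf_mult) (auto simp: suminf_geometric)
  finally show ?thesis .
qed

lemma abs_le_of_omega_words_alphabet:
  "A \<in> omega_words (alphabet \<mu>) \<Longrightarrow> \<bar>A i\<bar> \<le> \<mu>"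
  unfolding omega_words_def alphabet_def by (simp add: abs_le_iff) (metis minus_le_iff)

lemma summable_discounted:
  fixes A :: "nat \<Rightarrow> int" and \<mu> :: int
  assumes "\<And>i. \<bar>A i\<bar> \<le> \<mu>" and "d > 1"
  shows "summable (\<lambda>i. real_of_int (A i) / d ^ i)"
proof (rule summable_comparison_test)
  show "\<exists>N. \<forall>i\<ge>N. norm (real_of_int (A i) / d ^ i) \<le> \<mu> * (1 / d) ^ i"
    using assms by (auto simp: power_one_over divide_right_mono simp flip: of_int_abs)
  show "summable (\<lambda>i. \<mu> * (1 / d) ^ i)"
    using assms by (intro summable_mult summable_geometric) auto
qed

lemma DS_diff_le_common_prefix:
  fixes A B :: "nat \<Rightarrow> int" and \<mu> :: int
  assumes A: "\<And>i. \<bar>A i\<bar> \<le> \<mu>" and B: "\<And>i. \<bar>B i\<bar> \<le> \<mu>"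
    and common_prefix: "\<And>i. i < n \<Longrightarrow> A i = B i" and "d > 1"
  shows "\<bar>DS A d - DS B d\<bar> \<le> 2 * \<mu> * (1 / d) ^ n / (1 - 1 / d)"
proof -
  have "DS A d - DS B d = (\<Sum>i. real_of_int (A i - B i) / d ^ i)"
    unfolding DS_def
    using suminf_diff[OF summable_discounted[OF A \<open>d > 1\<close>] summable_discounted[OF B \<open>d > 1\<close>]]
    by (simp add: diff_divide_distrib)
  also have "\<bar>\<dots>\<bar> \<le> 2 * \<mu> * (1 / d) ^ n / (1 - 1 / d)"
  proof (rule abs_suminf_le_geometric_tail)
    fix i
    have "\<bar>real_of_int (A i - B i)\<bar> \<le> 2 * \<mu>"
      using A[of i] B[of i] by linarith
    then show "\<bar>real_of_int (A i - B i) / d ^ i\<bar> \<le> 2 * \<mu> * (1 / d) ^ i"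
      using \<open>d > 1\<close> by (simp add: abs_divide divide_right_mono power_one_over)
  qed (use common_prefix \<open>d > 1\<close> in auto)
  finally show ?thesis .
qed

lemma conc_prefix_in_omega_words:
  "A \<in> omega_words \<Sigma> \<Longrightarrow> Y \<in> omega_words \<Sigma> \<Longrightarrow> conc (map A [0..<n]) Y \<in> omega_words \<Sigma>"
  by (auto simp: omega_words_def conc_def)

lemma DS_conc_prefix_close:
  assumes A: "A \<in> omega_words (alphabet \<mu>)" and "d > 1" and "e > 0"
  obtains n where "\<And>Y. Y \<in> omega_words (alphabet \<mu>) \<Longrightarrow>
    \<bar>DS (conc (map A [0..<n]) Y) d - DS A d\<bar> < e"
proof -
  have "(\<lambda>n. 2 * \<mu> * (1 / d) ^ n / (1 - 1 / d)) \<longlonglongrightarrow> 0"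
    using \<open>d > 1\<close> by (intro tendsto_divide_zero tendsto_mult_right_zero LIMSEQ_power_zero) auto
  then have "eventually (\<lambda>n. 2 * \<mu> * (1 / d) ^ n / (1 - 1 / d) < e) sequentially"
    using \<open>e > 0\<close> by (rule order_tendstoD(2))
  then obtain n where n: "2 * \<mu> * (1 / d) ^ n / (1 - 1 / d) < e"
    unfolding eventually_sequentially by auto
  have "\<bar>DS (conc (map A [0..<n]) Y) d - DS A d\<bar> < e" if "Y \<in> omega_words (alphabet \<mu>)" for Y
  proof -
    have "\<bar>DS (conc (map A [0..<n]) Y) d - DS A d\<bar> \<le> 2 * \<mu> * (1 / d) ^ n / (1 - 1 / d)"
      by (rule DS_diff_le_common_prefix[OF abs_le_of_omega_words_alphabet
            [OF conc_prefix_in_omega_words[OF A that]] abs_le_of_omega_words_alphabet[OF A] _ \<open>d > 1\<close>])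
        (simp add: conc_def)
    with n show ?thesis by linarith
  qed
  then show ?thesis by (rule that)
qed

lemma rel_sem_locally_constant:
  assumes "\<bar>b - a\<bar> < \<bar>a - v\<bar>"
  shows "rel_sem R b v = rel_sem R a v"
  using assms by (cases R) (auto simp: abs_if split: if_splits)

lemma rel_sem_refl_iff: "rel_sem R a a \<longleftrightarrow> R \<in> {Le, Ge, Eq}"
  by (cases R) auto

lemma comparison_decided_by_prefix:
  assumes A: "A \<in> omega_words (alphabet \<mu>)" and "d > 1" and "DS A d \<noteq> v"
  obtains n where "\<And>Y. Y \<in> omega_words (alphabet \<mu>) \<Longrightarrow>
    conc (map A [0..<n]) Y \<in> comparison_language \<mu> R d v \<longleftrightarrow> A \<in> comparison_language \<mu> R d v"
proof -
  obtain n where "\<And>Y. Y \<in> omega_words (alphabet \<mu>) \<Longrightarrow>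
      \<bar>DS (conc (map A [0..<n]) Y) d - DS A d\<bar> < \<bar>DS A d - v\<bar>"
    using DS_conc_prefix_close[OF A \<open>d > 1\<close>, of "\<bar>DS A d - v\<bar>"] \<open>DS A d \<noteq> v\<close> by auto
  with A have "conc (map A [0..<n]) Y \<in> comparison_language \<mu> R d v
      \<longleftrightarrow> A \<in> comparison_language \<mu> R d v" if "Y \<in> omega_words (alphabet \<mu>)" for Y
    using that by (simp add: comparison_language_def conc_prefix_in_omega_words rel_sem_locally_constant)
  then show ?thesis by (rule that)
qed

lemma safetyI:
  assumes "\<And>A. A \<in> omega_words \<Sigma> - L \<Longrightarrow>
    \<exists>n. \<forall>Y \<in> omega_words \<Sigma>. conc (map A [0..<n]) Y \<notin> L"
  shows "safety \<Sigma> L"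
  using assms by (fastforce simp: safety_def bad_prefix_def omega_words_def)

theorem theorem5:
  fixes \<mu> :: int and d v :: real and R :: rel
  assumes "\<mu> > 1" and "d > 1" and "v \<in> \<rat>"
  shows "(R \<in> {Le, Ge, Eq} \<longrightarrow> safety (alphabet \<mu>) (comparison_language \<mu> R d v))
       \<and> (R \<in> {Lt, Gt, Neq} \<longrightarrow> co_safety (alphabet \<mu>) (comparison_language \<mu> R d v))"
proof -
  let ?W = "omega_words (alphabet \<mu>)" and ?L = "comparison_language \<mu> R d v"
  have DS_ne: "DS A d \<noteq> v" if "A \<in> ?W" "A \<in> ?L \<longleftrightarrow> R \<notin> {Le, Ge, Eq}" for A
    using that rel_sem_refl_iff[of R v] by (auto simp: comparison_language_def)
  have "safety (alphabet \<mu>) ?L" if "R \<in> {Le, Ge, Eq}"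
  proof (rule safetyI)
    fix A assume A: "A \<in> ?W - ?L"
    with that have "DS A d \<noteq> v" by (intro DS_ne) auto
    with A obtain n where "\<And>Y. Y \<in> ?W \<Longrightarrow> conc (map A [0..<n]) Y \<in> ?L \<longleftrightarrow> A \<in> ?L"
      using comparison_decided_by_prefix[OF _ \<open>d > 1\<close>] by blast
    with A show "\<exists>n. \<forall>Y \<in> ?W. conc (map A [0..<n]) Y \<notin> ?L" by blast
  qed
  moreover have "co_safety (alphabet \<mu>) ?L" if "R \<in> {Lt, Gt, Neq}"
    unfolding co_safety_def
  proof (rule safetyI)
    fix A assume A: "A \<in> ?W - (?W - ?L)"
    with that have "DS A d \<noteq> v" by (intro DS_ne) auto
    with A obtain n where "\<And>Y. Y \<in> ?W \<Longrightarrow> conc (map A [0..<n]) Y \<in> ?L \<longleftrightarrow> A \<in> ?L"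
      using comparison_decided_by_prefix[OF _ \<open>d > 1\<close>] by blast
    with A show "\<exists>n. \<forall>Y \<in> ?W. conc (map A [0..<n]) Y \<notin> ?W - ?L" by blast
  qed
  ultimately show ?thesis by blast
qed

end
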